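(* Suppose $m=0$ (purely deterministic problem) and, for $\mathfrak{g}\in\{\mathfrak{h},\mathfrak{r},\mathfrak{d}\}$, let $\mathcal{G}(q)=\max\{\mathfrak{g}(\tau):\tau\in T,\ \rho(\tau)\le q\}$. Then for every integer $q\ge1$: $\mathcal{G}(q)=q$ for $\mathfrak{g}=\mathfrak{h}$ (simple iterations); $\mathcal{G}(q)=\lfloor\frac{q+1}{2}\rfloor$ for $\mathfrak{g}=\mathfrak{r}$ (modified Newton iterations); $\mathcal{G}(q)=\lfloor\log_2(q+1)\rfloor$ for $\mathfrak{g}=\mathfrak{d}$ (full Newton iterations).
   Context: With $m=0$, $T$ is the set of rooted trees (all vertices of the single color $0$): the empty tree $\emptyset$ and all $\tau=[\tau_1,\dots,\tau_\kappa]_0$, $\kappa\ge0$, $\tau_j\in T\setminus\{\emptyset\}$ unordered (new root joined to roots of the $\tau_j$; $\bullet_0$ if $\kappa=0$). Order: $\rho(\emptyset)=0$, $\rho([\tau_1,\dots,\tau_\kappa]_0)=1+\sum_j\rho(\tau_j)$ (number of vertices). Maxima over empty sets are $0$. $\mathfrak{h}(\emptyset)=0$, $\mathfrak{h}(\bullet_0)=1$, $\mathfrak{h}([\tau_1,\dots,\tau_\kappa]_0)=1+\max_j\mathfrak{h}(\tau_j)$; $\mathfrak{r}(\emptyset)=0$, $\mathfrak{r}(\bullet_0)=1$, $\mathfrak{r}([\tau_1]_0)=\mathfrak{r}(\tau_1)$, $\mathfrak{r}([\tau_1,\dots,\tau_\kappa]_0)=1+\max_j\mathfrak{r}(\tau_j)$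 for $\kappa\ge2$; $\mathfrak{d}(\emptyset)=0$, $\mathfrak{d}(\bullet_0)=1$, $\mathfrak{d}([\tau_1,\dots,\tau_\kappa]_0)=M$ if exactly one $i$ has $\mathfrak{d}(\tau_i)=M:=\max_j\mathfrak{d}(\tau_j)$, and $M+1$ if at least two indices attain $M$. *)

theory Defs
  imports Complex_Main "HOL-Library.Multiset"
begin

text \<open>Nonempty rooted trees with unordered children (single colour 0):
  a node with a multiset of (nonempty) subtrees. The set T of the paper
  (including the empty tree) is rendered as rtree option, None = empty tree.\<close>
datatype rtree = Node "rtree multiset"

primrec rho_t :: "rtree \<Rightarrow> nat" where
  "rho_t (Node ts) = 1 + sum_mset (image_mset rho_t ts)"

primrec h_t :: "rtree \<Rightarrow> nat" where
  "h_t (Node ts) = 1 + Max (insert 0 (set_mset (image_mset h_t ts)))"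

primrec r_t :: "rtree \<Rightarrow> nat" where
  "r_t (Node ts) =
     (if size ts = 0 then 1
      else if size ts = 1 then the_elem (set_mset (image_mset r_t ts))
      else 1 + Max (set_mset (image_mset r_t ts)))"

primrec d_t :: "rtree \<Rightarrow> nat" where
  "d_t (Node ts) =
     (if size ts = 0 then 1
      else (let ds = image_mset d_t ts; M = Max (set_mset ds)
            in if count ds M \<ge> 2 then M + 1 else M))"

definition lift_T :: "(rtree \<Rightarrow> nat) \<Rightarrow> rtree option \<Rightarrow> nat" where
  "lift_T f t = (case t of None \<Rightarrow> 0 | Some s \<Rightarrow> f s)"

definition rho :: "rtree option \<Rightarrow> nat" where "rho = lift_T rho_t"
definition hgt :: "rtree option \<Rightarrow> nat" where "hgt = lift_T h_t"
definition rfun :: "rtree option \<Rightarrow> nat" where "rfun = lift_T r_t"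
definition dfun :: "rtree option \<Rightarrow> nat" where "dfun = lift_T d_t"

definition GG :: "(rtree option \<Rightarrow> nat) \<Rightarrow> nat \<Rightarrow> nat" where
  "GG g q = Max {g t | t. rho t \<le> q}"

end

theory Submission
  imports Defs "HOL-Library.Discrete_Functions"
begin

text \<open>Each of the three functionals is bounded by the order through a structural induction:
  \<open>h \<le> \<rho>\<close>; \<open>2 r \<le> \<rho> + 1\<close>, because \<open>r\<close> grows only at a branching vertex, whose
  extra branch costs at least one vertex besides the root; and \<open>2\<^sup>d \<le> \<rho> + 1\<close>,
  because \<open>d\<close> grows only when two subtrees attain the maximum, which doubles the size.
  Paths, combs (a path with a leaf hanging from every inner vertex) and perfect binary
  trees attain these bounds.\<close>

lemma rho_t_ge_1: "rho_t t \<ge> 1"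
  by (cases t) simp

lemma member_le_sum_mset_image: "x \<in># ts \<Longrightarrow> (f x :: nat) \<le> (\<Sum>y\<in>#ts. f y)"
  by (metis multi_member_split image_mset_add_mset sum_mset.add_mset le_add1)

lemma count_image_mset_ge_2_split:
  assumes "count (image_mset f M) y \<ge> 2"
  obtains a b R where "M = add_mset a (add_mset b R)" "f a = y" "f b = y"
proof -
  have "y \<in># image_mset f M" using assms by (intro count_inI) simp
  then obtain a where a: "a \<in># M" "f a = y" by auto
  then obtain R where R: "M = add_mset a R" by (metis multi_member_split)
  then have "y \<in># image_mset f R" using assms a(2) by (intro count_inI) simp
  then obtain b where b: "b \<in># R" "f b = y" by auto
  then obtain R' where "R = add_mset b R'" by (metis multi_member_split)
  with R a(2) b(2) show thesis by (intro that[of a b R']) simp_all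
qed

lemma h_t_le_rho_t: "h_t t \<le> rho_t t"
proof (induction t)
  case (Node ts)
  have "Max (insert 0 (set_mset (image_mset h_t ts))) \<le> (\<Sum>s\<in>#ts. rho_t s)"
  proof (rule Max.boundedI)
    fix a assume "a \<in> insert 0 (set_mset (image_mset h_t ts))"
    then show "a \<le> (\<Sum>s\<in>#ts. rho_t s)"
    proof
      assume "a \<in> set_mset (image_mset h_t ts)"
      then obtain s where s: "s \<in># ts" "a = h_t s" by auto
      then have "a \<le> rho_t s" using Node by auto
      also have "\<dots> \<le> (\<Sum>s\<in>#ts. rho_t s)" using s(1) by (rule member_le_sum_mset_image)
      finally show ?thesis .
    qed simp
  qed auto
  then show ?case by simp
qed

lemma r_t_bound: "2 * r_t t \<le> rho_t t + 1"
proof (induction t)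
  case (Node ts)
  consider "size ts = 0" | "size ts = 1" | "size ts \<ge> 2" by linarith
  then show ?case
  proof cases
    case 1
    then show ?thesis by simp
  next
    case 2
    then obtain a where "ts = {#a#}" by (metis size_1_singleton_mset)
    then show ?thesis using Node[of a] by simp
  next
    case 3
    then have "ts \<noteq> {#}" by auto
    then have "Max (set_mset (image_mset r_t ts)) \<in> set_mset (image_mset r_t ts)"
      by (intro Max_in) auto
    then obtain a where a: "a \<in># ts" "Max (set_mset (image_mset r_t ts)) = r_t a" by auto
    then obtain R where R: "ts = add_mset a R" by (metis multi_member_split)
    with 3 have "R \<noteq> {#}" by auto
    then obtain b where "b \<in># R" by blast
    then have "1 \<le> (\<Sum>s\<in>#R. rho_t s)"
      using rho_t_ge_1[of b] member_le_sum_mset_image[of b R rho_t] by linarith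
    moreover have "2 * r_t a \<le> rho_t a + 1" using Node a(1) by blast
    moreover have "r_t (Node ts) = 1 + r_t a" using 3 a(2) \<open>ts \<noteq> {#}\<close> by simp
    ultimately show ?thesis using R by simp
  qed
qed

lemma d_t_bound: "2 ^ d_t t \<le> rho_t t + 1"
proof (induction t)
  case (Node ts)
  show ?case
  proof (cases "ts = {#}")
    case True
    then show ?thesis by simp
  next
    case False
    define M where "M = Max (set_mset (image_mset d_t ts))"
    have d_Node: "d_t (Node ts) = (if count (image_mset d_t ts) M \<ge> 2 then M + 1 else M)"
      using False by (simp add: M_def Let_def)
    show ?thesis
    proof (cases "count (image_mset d_t ts) M \<ge> 2")
      case True
      then obtain a b R where ab: "ts = add_mset a (add_mset b R)" "d_t a = M" "d_t b = M"
        by (rule count_image_mset_ge_2_split)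
      have "2 ^ d_t a \<le> rho_t a + 1" "2 ^ d_t b \<le> rho_t b + 1"
        using Node.IH[of a] Node.IH[of b] ab(1) by simp_all
      then have "2 ^ M \<le> rho_t a + 1" "2 ^ M \<le> rho_t b + 1" using ab(2,3) by simp_all
      moreover have "rho_t (Node ts) = 1 + rho_t a + rho_t b + (\<Sum>s\<in>#R. rho_t s)"
        using ab(1) by simp
      ultimately show ?thesis using d_Node True by simp
    next
      case False
      have "M \<in> set_mset (image_mset d_t ts)"
        unfolding M_def using \<open>ts \<noteq> {#}\<close> by (intro Max_in) auto
      then obtain a where a: "a \<in># ts" "d_t a = M" by auto
      then have "2 ^ M \<le> rho_t a + 1" using Node by blast
      moreover have "rho_t a \<le> (\<Sum>s\<in>#ts. rho_t s)" using a(1) by (rule member_le_sum_mset_image)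
      ultimately show ?thesis using d_Node False by simp
    qed
  qed
qed

primrec path_tree :: "nat \<Rightarrow> rtree" where
  "path_tree 0 = Node {#}"
| "path_tree (Suc n) = Node {#path_tree n#}"

primrec comb_tree :: "nat \<Rightarrow> rtree" where
  "comb_tree 0 = Node {#}"
| "comb_tree (Suc n) = Node {#comb_tree n, Node {#}#}"

primrec perfect_binary_tree :: "nat \<Rightarrow> rtree" where
  "perfect_binary_tree 0 = Node {#}"
| "perfect_binary_tree (Suc n) = Node {#perfect_binary_tree n, perfect_binary_tree n#}"

lemma rho_t_path_tree [simp]: "rho_t (path_tree n) = n + 1"
  by (induction n) auto

lemma h_t_path_tree [simp]: "h_t (path_tree n) = n + 1"
  by (induction n) auto

lemma rho_t_comb_tree [simp]: "rho_t (comb_tree n) = 2 * n + 1"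
  by (induction n) auto

lemma r_t_comb_tree [simp]: "r_t (comb_tree n) = n + 1"
  by (induction n) (auto simp: max_def)

lemma rho_t_perfect_binary_tree: "rho_t (perfect_binary_tree n) + 1 = 2 ^ (n + 1)"
proof (induction n)
  case (Suc n)
  have "rho_t (perfect_binary_tree (Suc n)) + 1 = 2 * (rho_t (perfect_binary_tree n) + 1)"
    by simp
  with Suc.IH show ?case by simp
qed simp

lemma d_t_perfect_binary_tree [simp]: "d_t (perfect_binary_tree n) = n + 1"
  by (induction n) (auto simp: Let_def)

lemma lift_T_simps [simp]: "lift_T f None = 0" "lift_T f (Some t) = f t"
  by (simp_all add: lift_T_def)

lemma GG_eqI:
  assumes "\<And>t. rho t \<le> q \<Longrightarrow> g t \<le> m" and "rho w \<le> q" and "g w = m"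
  shows "GG g q = m"
proof -
  have "{g t | t. rho t \<le> q} \<subseteq> {..m}" using assms(1) by auto
  then have "finite {g t | t. rho t \<le> q}" by (rule finite_subset) simp
  then show ?thesis unfolding GG_def by (rule Max_eqI) (use assms in auto)
qed

lemma GG_hgt: "q \<ge> 1 \<Longrightarrow> GG hgt q = q"
proof (rule GG_eqI[where w = "Some (path_tree (q - 1))"])
  fix t assume "rho t \<le> q"
  then show "hgt t \<le> q"
    using h_t_le_rho_t by (cases t) (auto simp: hgt_def rho_def intro: order_trans)
qed (simp_all add: hgt_def rho_def)

lemma GG_rfun: "q \<ge> 1 \<Longrightarrow> GG rfun q = (q + 1) div 2"
proof (rule GG_eqI[where w = "Some (comb_tree ((q + 1) div 2 - 1))"])
  fix t assume "rho t \<le> q"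
  then have "2 * rfun t \<le> q + 1"
    using r_t_bound by (cases t) (auto simp: rfun_def rho_def intro: order_trans)
  then show "rfun t \<le> (q + 1) div 2" by simp
qed (simp_all add: rfun_def rho_def)

lemma GG_dfun: "q \<ge> 1 \<Longrightarrow> GG dfun q = floor_log (q + 1)"
proof (rule GG_eqI[where w = "Some (perfect_binary_tree (floor_log (q + 1) - 1))"])
  fix t assume "rho t \<le> q"
  then have "2 ^ dfun t \<le> q + 1"
    using d_t_bound by (cases t) (auto simp: dfun_def rho_def intro: order_trans)
  then show "dfun t \<le> floor_log (q + 1)"
    using floor_log_le_iff[of "2 ^ dfun t" "q + 1"] by simp
next
  assume "q \<ge> 1"
  then have "floor_log (q + 1) \<ge> 1"
    using floor_log_le_iff[of 2 "q + 1"] floor_log_power[of 1] by simp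
  moreover have "2 ^ floor_log (q + 1) \<le> q + 1" by (simp add: floor_log_exp2_le)
  ultimately show "rho (Some (perfect_binary_tree (floor_log (q + 1) - 1))) \<le> q"
    "dfun (Some (perfect_binary_tree (floor_log (q + 1) - 1))) = floor_log (q + 1)"
    using rho_t_perfect_binary_tree[of "floor_log (q + 1) - 1"]
    by (simp_all add: rho_def dfun_def)
qed

theorem mainTheorem12:
  fixes q :: nat
  assumes "q \<ge> 1"
  shows "GG hgt q = q \<and> GG rfun q = (q + 1) div 2
         \<and> int (GG dfun q) = \<lfloor>log 2 (real q + 1)\<rfloor>"
proof -
  have "int (floor_log (q + 1)) = \<lfloor>log 2 (real q + 1)\<rfloor>"
    by (simp add: floor_log_altdef add.commute)
  with assms show ?thesis by (simp add: GG_hgt GG_rfun GG_dfun)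
qed

end
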